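(* Let $n\ge2$ and $\mathcal G_n$, $\mathcal N_{0,n}$, $z_g$, $U_m(z_g)$ as in the context. Let $f\in A_{\mathbb C}(\mathcal G_n)$ and suppose there is $m\in\mathbb N$ such that $$f=\sum_{g\in\mathcal N_{0,n}}c_g1_{U_m(z_g)},\qquad c_g\in\mathbb C.$$ If $f(z_e)\neq0$, then $|f(z)|>|f(z_e)|/2^n$ for all $z$ in a set with nonempty interior; in particular $f\notin S_{\mathbb C}(\mathcal G_n)$.
   Context: Let $X=\{\mathbf 0,\mathbf 1\}$, $X^*$ the finite words (with empty word $\varnothing$), $X^\omega$ the infinite words, $C(\eta)=\{\eta w:w\in X^\omega\}$, $\mathbf 1^m$ and $\mathbf 1^\infty$ the finite/infinite words of ones. Fix $n\ge2$, a primitive polynomial $f_n$ of degree $n$ over $\mathbb F_2$ with root $\alpha$, and $\operatorname{Tr}(\beta)=\beta+\beta^2+\dots+\beta^{2^{n-1}}\in\mathbb F_2$. $\mathfrak G_n$ is the group of automorphisms of the binary rooted tree $X^*$ generated by $a$ ($a\cdot(\mathbf 0w)=\mathbf 1w$, $a\cdot(\mathbf 1w)=\mathbf 0w$) and $\iota_n(\beta)$, $\beta\in\mathbb F_{2^n}$, where $\iota_n(\beta)\cdot(\mathbf 0w)=\mathbf 0(a^{\operatorname{Tr}(\beta)}\cdot w)$, $\iota_n(\beta)\cdot(\mathbf 1w)=\mathbf 1(\iota_n(\alpha\beta)\cdot w)$; restrictions $g|_x$ are given by $g\cdot(xw)=(g\cdot x)(g|_x\cdot w)$. $\mathcal N_{0,n}=\iota_n(\mathbb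 F_{2^n})$, $e=\iota_n(0)$. $\mathcal G_n$ is the groupoid of germs of the action of the inverse semigroup $\{(\eta,g,\mu)\}\cup\{0\}$ on $X^\omega$ with $(\eta,g,\mu):C(\mu)\to C(\eta)$, $\mu w\mapsto\eta(g\cdot w)$; germs $[(\eta,g,\mu),w]$, $w\in C(\mu)$, with $[(\eta,g,\mu),w]=[(\eta',g',\mu'),w']$ iff $w=w'$ and some finite prefix $\nu=\mu\epsilon=\mu'\epsilon'$ of $w$ satisfies $\eta(g\cdot\epsilon)=\eta'(g'\cdot\epsilon')$ and $g|_\epsilon=g'|_{\epsilon'}$. $\Theta(s,U)=\{[s,w]:w\in U\}$ for $s=(\eta,g,\mu)$, $U\subseteq C(\mu)$ open; these form a basis of the topology. $z_g=[(\varnothing,g,\varnothing),\mathbf 1^\infty]$ and $U_m(z_g)=\Theta((\varnothing,g,\varnothing),C(\mathbf 1^m))$. $A_{\mathbb C}(\mathcal G_n)$ is the complex Steinberg algebra (span of characteristic functions of compact open bisections), and $S_{\mathbb C}(\mathcal G_n)$ its ideal of singular functions, i.e. those $f$ whose support $\{x:f(x)\neq0\}$ has empty interior. *)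

theory Defs
  imports "HOL-Analysis.Analysis"
begin

text \<open>Finite words over X = {0,1} are bool lists (False = 0, True = 1);
  infinite words are functions nat => bool; tree automorphisms act on finite words.\<close>

type_synonym word = "bool list"
type_synonym iword = "nat \<Rightarrow> bool"
type_synonym tauto = "word \<Rightarrow> word"
type_synonym triple = "word \<times> tauto \<times> word"
type_synonym germ = "(triple \<times> iword) set"

definition primitive_elem :: "'k::{field,finite} \<Rightarrow> bool" where
  "primitive_elem \<alpha> \<longleftrightarrow> \<alpha> \<noteq> 0 \<and> (\<forall>k::nat. 0 < k \<and> k < CARD('k) - 1 \<longrightarrow> \<alpha> ^ k \<noteq> 1)"

text \<open>Trace F_{2^n} -> F_2, as a boolean (True iff Tr beta = 1).\<close>
definition tr :: "nat \<Rightarrow> 'k::field \<Rightarrow> bool" where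
  "tr n \<beta> \<longleftrightarrow> (\<Sum>i<n. \<beta> ^ (2 ^ i)) \<noteq> 0"

fun aact :: "word \<Rightarrow> word" where
  "aact [] = []"
| "aact (x # w) = (\<not> x) # w"

fun iact :: "nat \<Rightarrow> 'k::field \<Rightarrow> 'k \<Rightarrow> word \<Rightarrow> word" where
  "iact n \<alpha> \<beta> [] = []"
| "iact n \<alpha> \<beta> (x # w) =
     (if x then True # iact n \<alpha> (\<alpha> * \<beta>) w
      else False # (if tr n \<beta> then aact w else w))"

inductive_set Ggrp :: "nat \<Rightarrow> 'k::field \<Rightarrow> tauto set" for n \<alpha> where
  grp_id: "id \<in> Ggrp n \<alpha>"
| grp_a: "aact \<in> Ggrp n \<alpha>"
| grp_iota: "iact n \<alpha> \<beta> \<in> Ggrp n \<alpha>"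
| grp_comp: "g \<in> Ggrp n \<alpha> \<Longrightarrow> h \<in> Ggrp n \<alpha> \<Longrightarrow> g \<circ> h \<in> Ggrp n \<alpha>"
| grp_inv: "g \<in> Ggrp n \<alpha> \<Longrightarrow> inv g \<in> Ggrp n \<alpha>"

text \<open>Restriction g|_eps, defined by g(eps w) = g(eps) g|_eps(w).\<close>
definition restr :: "tauto \<Rightarrow> word \<Rightarrow> tauto" where
  "restr g \<epsilon> = (\<lambda>w. drop (length \<epsilon>) (g (\<epsilon> @ w)))"

definition ptake :: "iword \<Rightarrow> nat \<Rightarrow> word" where
  "ptake w k = map w [0..<k]"

definition conc :: "word \<Rightarrow> iword \<Rightarrow> iword" where
  "conc \<eta> w = (\<lambda>i. if i < length \<eta> then \<eta> ! i else w (i - length \<eta>))"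

definition ishift :: "nat \<Rightarrow> iword \<Rightarrow> iword" where
  "ishift k w = (\<lambda>i. w (i + k))"

definition act_inf :: "tauto \<Rightarrow> iword \<Rightarrow> iword" where
  "act_inf g w = (\<lambda>i. g (ptake w (Suc i)) ! i)"

definition cyl :: "word \<Rightarrow> iword set" where
  "cyl \<eta> = {w. ptake w (length \<eta>) = \<eta>}"

definition ones :: iword where "ones = (\<lambda>_. True)"

definition openX :: "iword set \<Rightarrow> bool" where
  "openX U \<longleftrightarrow> (\<forall>w\<in>U. \<exists>k. cyl (ptake w k) \<subseteq> U)"

definition valid_rep :: "nat \<Rightarrow> 'k::field \<Rightarrow> triple \<times> iword \<Rightarrow> bool" where
  "valid_rep n \<alpha> r \<longleftrightarrow> (case r of ((\<eta>, g, \<mu>), w) \<Rightarrow> g \<in> Ggrp n \<alpha> \<and> w \<in> cyl \<mu>)"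

definition germ_rel :: "triple \<times> iword \<Rightarrow> triple \<times> iword \<Rightarrow> bool" where
  "germ_rel r r' \<longleftrightarrow> (case r of ((\<eta>, g, \<mu>), w) \<Rightarrow> case r' of ((\<eta>', g', \<mu>'), w') \<Rightarrow>
     w = w' \<and> (\<exists>\<epsilon> \<epsilon>'. \<mu> @ \<epsilon> = \<mu>' @ \<epsilon>' \<and> ptake w (length (\<mu> @ \<epsilon>)) = \<mu> @ \<epsilon>
        \<and> \<eta> @ g \<epsilon> = \<eta>' @ g' \<epsilon>' \<and> restr g \<epsilon> = restr g' \<epsilon>'))"

definition germ_of :: "nat \<Rightarrow> 'k::field \<Rightarrow> triple \<times> iword \<Rightarrow> germ" where
  "germ_of n \<alpha> r = {r'. valid_rep n \<alpha> r' \<and> germ_rel r r'}"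

definition Gn :: "nat \<Rightarrow> 'k::field \<Rightarrow> germ set" where
  "Gn n \<alpha> = {germ_of n \<alpha> r | r. valid_rep n \<alpha> r}"

definition Theta :: "nat \<Rightarrow> 'k::field \<Rightarrow> triple \<Rightarrow> iword set \<Rightarrow> germ set" where
  "Theta n \<alpha> s U = {germ_of n \<alpha> (s, w) | w. w \<in> U}"

definition basis :: "nat \<Rightarrow> 'k::field \<Rightarrow> germ set set" where
  "basis n \<alpha> = {Theta n \<alpha> (\<eta>, g, \<mu>) U | \<eta> g \<mu> U.
      g \<in> Ggrp n \<alpha> \<and> U \<subseteq> cyl \<mu> \<and> openX U}"

definition Gtop :: "nat \<Rightarrow> 'k::field \<Rightarrow> germ topology" where
  "Gtop n \<alpha> = topology_generated_by (basis n \<alpha>)"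

definition src :: "germ \<Rightarrow> iword" where
  "src x = snd (SOME r. r \<in> x)"

definition rng :: "germ \<Rightarrow> iword" where
  "rng x = (case (SOME r. r \<in> x) of ((\<eta>, g, \<mu>), w) \<Rightarrow>
      conc \<eta> (act_inf g (ishift (length \<mu>) w)))"

definition bisection :: "nat \<Rightarrow> 'k::field \<Rightarrow> germ set \<Rightarrow> bool" where
  "bisection n \<alpha> B \<longleftrightarrow> B \<subseteq> Gn n \<alpha> \<and> inj_on src B \<and> inj_on rng B"

definition compact_open_bisection :: "nat \<Rightarrow> 'k::field \<Rightarrow> germ set \<Rightarrow> bool" where
  "compact_open_bisection n \<alpha> B \<longleftrightarrow>
     bisection n \<alpha> B \<and> openin (Gtop n \<alpha>) B \<and> compactin (Gtop n \<alpha>) B"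

definition AC :: "nat \<Rightarrow> 'k::field \<Rightarrow> (germ \<Rightarrow> complex) set" where
  "AC n \<alpha> = {f. \<exists>Bs :: (germ set \<times> complex) list.
      (\<forall>(B, c) \<in> set Bs. compact_open_bisection n \<alpha> B) \<and>
      f = (\<lambda>x. \<Sum>(B, c) \<leftarrow> Bs. c * indicator B x)}"

definition SC :: "nat \<Rightarrow> 'k::field \<Rightarrow> (germ \<Rightarrow> complex) set" where
  "SC n \<alpha> = {f \<in> AC n \<alpha>. Gtop n \<alpha> interior_of {x. f x \<noteq> 0} = {}}"

definition z_germ :: "nat \<Rightarrow> 'k::field \<Rightarrow> tauto \<Rightarrow> germ" where
  "z_germ n \<alpha> g = germ_of n \<alpha> (([], g, []), ones)"

definition Um :: "nat \<Rightarrow> 'k::field \<Rightarrow> nat \<Rightarrow> tauto \<Rightarrow> germ set" where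
  "Um n \<alpha> m g = Theta n \<alpha> ([], g, []) (cyl (replicate m True))"

definition N0 :: "nat \<Rightarrow> 'k::field \<Rightarrow> tauto set" where
  "N0 n \<alpha> = range (iact n \<alpha>)"

end

theory Submission
  imports Defs "HOL-Computational_Algebra.Polynomial"
begin

text \<open>Write f = \<Sum>\<beta> C(\<beta>) 1[U_m(z_\<iota>(\<beta>))], so that f(z_e) = C(0).
  Below the vertex 1^k 0 the automorphism \<iota>(\<beta>) acts as a^Tr(\<alpha>^k \<beta>); hence for k \<ge> m
  the function f is constant on the open set \<Theta>(\<iota>(\<beta>0), C(1^k 0)), equal to the sum of C
  over the fibre {\<beta>. Tr(\<alpha>^k \<beta>) = Tr(\<alpha>^k \<beta>0)}. As \<alpha>^k runs through all nonzero \<gamma>,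
  it suffices to find \<gamma> \<noteq> 0 and a fibre of \<beta> \<mapsto> Tr(\<gamma>\<beta>) on which C sums to more
  than |C(0)|/2^n. If there were none, every character sum D(\<gamma>) = \<Sum>\<beta> C(\<beta>) (-1)^Tr(\<gamma>\<beta>),
  being a sum or difference of two such fibre sums, would have modulus at most 2|C(0)|/2^n,
  whereas \<Sum>\<gamma> D(\<gamma>) = 2^n C(0) by orthogonality of characters; this contradicts 2^n \<ge> 4.\<close>

section \<open>Finite fields and the trace\<close>

lemma finite_field_card_ge_two: "CARD('k::{field,finite}) \<ge> 2"
  using card_mono[of UNIV "{0, 1::'k}"] by simp

lemma finite_field_power_card_minus_one:
  fixes x :: "'k::{field,finite}"
  assumes "x \<noteq> 0"
  shows "x ^ (CARD('k) - 1) = 1"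
proof -
  let ?U = "UNIV - {0::'k}"
  have "(\<Prod>y\<in>?U. x * y) = (\<Prod>y\<in>?U. y)"
    by (rule prod.reindex_bij_witness[where i="\<lambda>y. y / x" and j="\<lambda>y. x * y"]) (use assms in auto)
  moreover have "(\<Prod>y\<in>?U. x * y) = x ^ card ?U * (\<Prod>y\<in>?U. y)"
    by (simp add: prod.distrib)
  moreover have "(\<Prod>y\<in>?U. y) \<noteq> 0" by simp
  ultimately show ?thesis by (simp add: card_Diff_singleton)
qed

lemma finite_field_power_card:
  fixes x :: "'k::{field,finite}"
  shows "x ^ CARD('k) = x"
proof (cases "x = 0")
  case False
  have "CARD('k) = Suc (CARD('k) - 1)" by simp
  then show ?thesis using finite_field_power_card_minus_one[OF False] by (metis power_Suc mult_1_right)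
qed simp

lemma finite_field_even_card_char_two:
  assumes "even CARD('k::{field,finite})"
  shows "(1::'k) + 1 = 0"
proof -
  have "(-1::'k) = (-1) ^ (CARD('k) - 1)"
    using assms by (simp add: odd_pos)
  also have "\<dots> = 1" by (rule finite_field_power_card_minus_one) simp
  finally show ?thesis by (metis add.right_inverse)
qed

lemma primitive_elem_nonzero: "primitive_elem \<alpha> \<Longrightarrow> \<alpha> \<noteq> 0"
  by (simp add: primitive_elem_def)

lemma primitive_elem_powers_surj:
  fixes \<alpha> \<gamma> :: "'k::{field,finite}"
  assumes "primitive_elem \<alpha>" "\<gamma> \<noteq> 0"
  shows "\<exists>j. \<alpha> ^ j = \<gamma>"
proof -
  let ?q = "CARD('k) - 1"
  have "inj_on (\<lambda>i. \<alpha> ^ i) {..<?q}"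
  proof (rule linorder_inj_onI)
    fix i j assume "i < j" "j \<in> {..<?q}"
    have "\<alpha> ^ j = \<alpha> ^ i * \<alpha> ^ (j - i)" using \<open>i < j\<close> by (simp flip: power_add)
    moreover have "\<alpha> ^ (j - i) \<noteq> 1"
      using assms(1) \<open>i < j\<close> \<open>j \<in> {..<?q}\<close> by (simp add: primitive_elem_def)
    ultimately show "\<alpha> ^ i \<noteq> \<alpha> ^ j" using primitive_elem_nonzero[OF assms(1)] by auto
  qed auto
  then have "card ((\<lambda>i. \<alpha> ^ i) ` {..<?q}) = card (UNIV - {0::'k})"
    by (simp add: card_image card_Diff_singleton)
  moreover have "(\<lambda>i. \<alpha> ^ i) ` {..<?q} \<subseteq> UNIV - {0}"
    using primitive_elem_nonzero[OF assms(1)] by auto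
  ultimately have "(\<lambda>i. \<alpha> ^ i) ` {..<?q} = UNIV - {0}"
    by (intro card_subset_eq) auto
  then have "\<gamma> \<in> (\<lambda>i. \<alpha> ^ i) ` {..<?q}" using assms(2) by simp
  then show ?thesis by auto
qed

lemma primitive_elem_powers_surj_ge:
  fixes \<alpha> \<gamma> :: "'k::{field,finite}"
  assumes "primitive_elem \<alpha>" "\<gamma> \<noteq> 0"
  shows "\<exists>k\<ge>m. \<alpha> ^ k = \<gamma>"
proof -
  obtain j where j: "\<alpha> ^ j = \<gamma>" using primitive_elem_powers_surj[OF assms] by blast
  have "\<alpha> ^ (j + (CARD('k) - 1) * m) = \<gamma>"
    using j finite_field_power_card_minus_one[OF primitive_elem_nonzero[OF assms(1)]]
    by (simp add: power_add power_mult)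
  moreover have "m \<le> (CARD('k) - 1) * m"
    using finite_field_card_ge_two[where 'k='k] mult_le_mono1[of 1 "CARD('k) - 1" m] by auto
  then have "m \<le> j + (CARD('k) - 1) * m" by (rule trans_le_add2)
  ultimately show ?thesis by blast
qed

lemma char_two_power_two_power_add:
  fixes x y :: "'a::comm_ring_1"
  assumes "(1::'a) + 1 = 0"
  shows "(x + y) ^ (2 ^ i) = x ^ (2 ^ i) + y ^ (2 ^ i)"
proof (induction i)
  case (Suc i)
  have two: "(2::'a) = 0" using assms by simp
  have "(x + y) ^ (2 ^ Suc i) = ((x + y) ^ (2 ^ i))\<^sup>2" by (simp add: power_mult[symmetric] mult.commute)
  also have "\<dots> = (x ^ (2 ^ i))\<^sup>2 + (y ^ (2 ^ i))\<^sup>2" using Suc by (simp add: power2_sum two)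
  also have "\<dots> = x ^ (2 ^ Suc i) + y ^ (2 ^ Suc i)" by (simp add: power_mult[symmetric] mult.commute)
  finally show ?case .
qed simp

locale binary_field =
  fixes n :: nat and \<alpha> :: "'k::{field,finite}"
  assumes card_eq: "CARD('k) = 2 ^ n" and primitive: "primitive_elem \<alpha>"
begin

definition trace :: "'k \<Rightarrow> 'k" where
  "trace x = (\<Sum>i<n. x ^ (2 ^ i))"

lemma tr_iff_trace: "tr n x \<longleftrightarrow> trace x \<noteq> 0"
  by (simp add: tr_def trace_def)

lemma n_pos: "n > 0"
  using finite_field_card_ge_two[where 'k='k] card_eq by (cases n) auto

lemma one_plus_one: "(1::'k) + 1 = 0"
  using finite_field_even_card_char_two[where 'k='k] card_eq n_pos by simp

lemma uminus_eq_self: "- (x::'k) = x"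
  by (metis add.inverse_unique distrib_left mult.right_neutral mult_zero_right one_plus_one)

lemma trace_add: "trace (x + y) = trace x + trace y"
  by (simp add: trace_def char_two_power_two_power_add[OF one_plus_one] sum.distrib)

lemma trace_squared: "(trace x)\<^sup>2 = trace x"
proof -
  have "(trace x)\<^sup>2 = (\<Sum>i<n. x ^ (2 ^ Suc i))"
  proof -
    have "(\<Sum>i\<in>A. a i)\<^sup>2 = (\<Sum>i\<in>A. (a i)\<^sup>2)" for A and a :: "nat \<Rightarrow> 'k"
      by (induction A rule: infinite_finite_induct)
        (simp_all add: char_two_power_two_power_add[OF one_plus_one, where i=1, simplified])
    then show ?thesis by (simp add: trace_def power_mult[symmetric] mult.commute)
  qed
  also have "\<dots> = trace x"
    using sum.lessThan_Suc_shift[of "\<lambda>i. x ^ (2 ^ i)" n] finite_field_power_card[of x]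
    by (simp add: trace_def card_eq)
  finally show ?thesis .
qed

lemma trace_eq_0_or_1: "trace x = 0 \<or> trace x = 1"
proof -
  have "trace x * (trace x - 1) = 0"
    using trace_squared[of x] by (simp add: power2_eq_square algebra_simps)
  then show ?thesis by simp
qed

lemma tr_add: "tr n ((x::'k) + y) \<longleftrightarrow> tr n x \<noteq> tr n y"
  using trace_eq_0_or_1[of x] trace_eq_0_or_1[of y] one_plus_one
  by (auto simp: tr_iff_trace trace_add)

lemma tr_zero: "\<not> tr n (0::'k)"
  by (simp add: tr_def power_0_left)

lemma tr_exists: "\<exists>x::'k. tr n x"
proof (rule ccontr)
  assume no_tr: "\<not> ?thesis"
  define p :: "'k poly" where "p = (\<Sum>i<n. monom 1 (2 ^ i))"
  have "coeff p 1 = 1"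
    using n_pos by (simp add: p_def coeff_sum sum.delta' flip: power_0)
  then have "p \<noteq> 0" by auto
  have "{x. poly p x = 0} = UNIV"
    using no_tr by (auto simp: p_def poly_sum poly_monom tr_def)
  then have "2 ^ n \<le> degree p"
    using card_poly_roots_bound[OF \<open>p \<noteq> 0\<close>] card_eq by simp
  also have "degree p \<le> 2 ^ (n - 1)" unfolding p_def
    by (intro degree_sum_le) (auto intro!: order.trans[OF degree_monom_le] power_increasing)
  also have "(2::nat) ^ (n - 1) < 2 ^ n"
    using n_pos by (intro power_strict_increasing) auto
  finally show False by simp
qed

lemma tr_power_mult_inject:
  assumes "\<And>k. tr n (\<alpha> ^ k * \<beta>) = tr n (\<alpha> ^ k * \<beta>')"
  shows "\<beta> = \<beta>'"
proof (rule ccontr)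
  assume "\<beta> \<noteq> \<beta>'"
  obtain x :: 'k where x: "tr n x" using tr_exists by blast
  then have "x / (\<beta> + \<beta>') \<noteq> 0"
    using tr_zero \<open>\<beta> \<noteq> \<beta>'\<close> uminus_eq_self[of \<beta>'] by (auto simp: add_eq_0_iff)
  then obtain k where "\<alpha> ^ k = x / (\<beta> + \<beta>')"
    using primitive_elem_powers_surj[OF primitive] by blast
  then have "\<alpha> ^ k * (\<beta> + \<beta>') = x"
    using \<open>x / (\<beta> + \<beta>') \<noteq> 0\<close> by simp
  then have "\<alpha> ^ k * \<beta> + \<alpha> ^ k * \<beta>' = x"
    by (simp add: distrib_left)
  then show False using assms[of k] x tr_add by metis
qed

definition trace_char :: "'k \<Rightarrow> complex" where
  "trace_char x = (if tr n x then -1 else 1)"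

lemma trace_char_add: "trace_char (x + y) = trace_char x * trace_char y"
  by (simp add: trace_char_def tr_add)

lemma sum_trace_char_mult:
  assumes "\<beta> \<noteq> 0"
  shows "(\<Sum>\<gamma>\<in>UNIV. trace_char (\<gamma> * \<beta>)) = 0"
proof -
  obtain x :: 'k where x: "tr n x" using tr_exists by blast
  have "(\<Sum>y\<in>UNIV. trace_char y) = (\<Sum>y\<in>UNIV. trace_char (y + x))"
    by (rule sum.reindex_bij_witness[where j="\<lambda>y. y - x" and i="\<lambda>y. y + x"]) auto
  also have "\<dots> = - (\<Sum>y\<in>UNIV. trace_char y)"
    using x by (simp add: trace_char_add trace_char_def[of x] sum_negf)
  finally have "(\<Sum>y\<in>UNIV. trace_char y) = 0" by simp
  moreover have "(\<Sum>\<gamma>\<in>UNIV. trace_char (\<gamma> * \<beta>)) = (\<Sum>y\<in>UNIV. trace_char y)"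
    by (rule sum.reindex_bij_witness[where j="\<lambda>y. y * \<beta>" and i="\<lambda>y. y / \<beta>"]) (use assms in auto)
  ultimately show ?thesis by simp
qed

lemma trace_fibre_sum_large:
  fixes C :: "'k \<Rightarrow> complex"
  assumes "n \<ge> 2" and "C 0 \<noteq> 0"
  shows "\<exists>\<gamma> b. \<gamma> \<noteq> 0 \<and> cmod (sum C {\<beta>. tr n (\<gamma> * \<beta>) = b}) > cmod (C 0) / 2 ^ n"
proof (rule ccontr)
  define S where "S \<gamma> b = sum C {\<beta>. tr n (\<gamma> * \<beta>) = b}" for \<gamma> b
  define e where "e = cmod (C 0) / 2 ^ n"
  assume "\<not> ?thesis"
  then have S_small: "cmod (S \<gamma> b) \<le> e" if "\<gamma> \<noteq> 0" for \<gamma> b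
    using that by (auto simp: S_def e_def not_less)
  define D where "D \<gamma> = (\<Sum>\<beta>\<in>UNIV. C \<beta> * trace_char (\<gamma> * \<beta>))" for \<gamma>
  have sum_split_fibres: "(\<Sum>\<beta>\<in>UNIV. h \<beta>) =
      (\<Sum>\<beta> | tr n (\<gamma> * \<beta>) = False. h \<beta>) + (\<Sum>\<beta> | tr n (\<gamma> * \<beta>) = True. h \<beta>)"
    for h :: "'k \<Rightarrow> complex" and \<gamma>
    by (subst sum.union_disjoint[symmetric]) (auto intro: sum.cong)
  have D_eq: "D \<gamma> = S \<gamma> False - S \<gamma> True" for \<gamma>
    unfolding D_def sum_split_fibres[of _ \<gamma>] by (simp add: S_def trace_char_def sum_negf)
  have D_small: "cmod (D \<gamma>) \<le> 2 * e" for \<gamma>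
  proof (cases "\<gamma> = 0")
    case True
    have "D \<gamma> = S 1 False + S 1 True"
      using True sum_split_fibres[of C 1] by (simp add: D_def S_def trace_char_def tr_zero)
    then show ?thesis
      using norm_triangle_ineq[of "S 1 False" "S 1 True"] S_small[of 1 False] S_small[of 1 True]
      by simp
  next
    case False
    show ?thesis
      using D_eq[of \<gamma>] norm_triangle_ineq4[of "S \<gamma> False" "S \<gamma> True"]
        S_small[OF False, of False] S_small[OF False, of True]
      by simp
  qed
  have "(\<Sum>\<gamma>\<in>UNIV. D \<gamma>) = (\<Sum>\<beta>\<in>UNIV. C \<beta> * (\<Sum>\<gamma>\<in>UNIV. trace_char (\<gamma> * \<beta>)))"
    unfolding D_def sum_distrib_left by (rule sum.swap)
  also have "\<dots> = (\<Sum>\<beta>::'k\<in>UNIV. if \<beta> = 0 then C 0 * 2 ^ n else 0)"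
    by (rule sum.cong[OF refl]) (auto simp: sum_trace_char_mult trace_char_def[of 0] tr_zero card_eq)
  also have "\<dots> = C 0 * 2 ^ n" by simp
  finally have sum_D: "(\<Sum>\<gamma>\<in>UNIV. D \<gamma>) = C 0 * 2 ^ n" .
  have "cmod (C 0) * 2 ^ n = cmod (\<Sum>\<gamma>\<in>UNIV. D \<gamma>)"
    by (simp add: sum_D norm_mult norm_power)
  also have "\<dots> \<le> (\<Sum>\<gamma>\<in>UNIV. cmod (D \<gamma>))" by (rule norm_sum)
  also have "\<dots> \<le> (\<Sum>\<gamma>::'k\<in>UNIV. 2 * e)" by (rule sum_mono) (rule D_small)
  also have "\<dots> = cmod (C 0) * 2" by (simp add: card_eq e_def)
  finally have "2 ^ n \<le> (2::real)"
    using assms(2) by simp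
  moreover have "(2::real) ^ 2 \<le> 2 ^ n"
    using assms(1) by (intro power_increasing) auto
  ultimately show False by simp
qed

end

section \<open>Tree automorphisms and germs\<close>

definition tree_automorphism :: "tauto \<Rightarrow> bool" where
  "tree_automorphism g \<longleftrightarrow>
     bij g \<and> (\<forall>u. length (g u) = length u) \<and> (\<forall>u k. g (take k u) = take k (g u))"

lemma tree_automorphism_involution:
  assumes "\<And>u. g (g u) = u" "\<And>u. length (g u) = length u" "\<And>u k. g (take k u) = take k (g u)"
  shows "tree_automorphism g"
proof -
  have "g \<circ> g = id" using assms(1) by auto
  then have "bij g" by (metis o_bij)
  then show ?thesis using assms(2,3) by (simp add: tree_automorphism_def)
qed

lemma aact_aact [simp]: "aact (aact u) = u"
  by (cases u) auto

lemma length_aact [simp]: "length (aact u) = length u"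
  by (cases u) auto

lemma aact_take: "aact (take k u) = take k (aact u)"
  by (cases u; cases k) auto

lemma tree_automorphism_aact: "tree_automorphism aact"
  by (rule tree_automorphism_involution) (simp_all add: aact_take)

lemma length_iact [simp]: "length (iact n \<alpha> \<beta> u) = length u"
  by (induction u arbitrary: \<beta>) auto

lemma tree_automorphism_iact: "tree_automorphism (iact n \<alpha> \<beta>)"
proof (rule tree_automorphism_involution)
  show "iact n \<alpha> \<beta> (iact n \<alpha> \<beta> u) = u" for u
    by (induction u arbitrary: \<beta>) auto
  show "length (iact n \<alpha> \<beta> u) = length u" for u by (rule length_iact)
  show "iact n \<alpha> \<beta> (take k u) = take k (iact n \<alpha> \<beta> u)" for u k
    by (induction u arbitrary: \<beta> k) (auto simp: take_Cons' aact_take)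
qed

lemma tree_automorphism_id: "tree_automorphism id"
  by (simp add: tree_automorphism_def)

lemma tree_automorphism_comp:
  "tree_automorphism g \<Longrightarrow> tree_automorphism h \<Longrightarrow> tree_automorphism (g \<circ> h)"
  by (auto simp: tree_automorphism_def bij_comp)

lemma tree_automorphism_inv:
  assumes "tree_automorphism g"
  shows "tree_automorphism (inv g)"
proof -
  have "bij g" and len: "\<And>u. length (g u) = length u" and take: "\<And>u k. g (take k u) = take k (g u)"
    using assms by (auto simp: tree_automorphism_def)
  then have g_inv: "g (inv g u) = u" and inv_g: "inv g (g u) = u" for u
    by (simp_all add: bij_is_surj surj_f_inv_f bij_is_inj)
  have "length (inv g u) = length u" for u by (metis g_inv len)
  moreover have "inv g (take k u) = take k (inv g u)" for u k by (metis g_inv inv_g take)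
  ultimately show ?thesis using \<open>bij g\<close> by (simp add: tree_automorphism_def bij_imp_bij_inv)
qed

lemma Ggrp_tree_automorphism: "g \<in> Ggrp n \<alpha> \<Longrightarrow> tree_automorphism g"
  by (induction rule: Ggrp.induct)
    (simp_all only: tree_automorphism_id tree_automorphism_aact tree_automorphism_iact
      tree_automorphism_comp tree_automorphism_inv)

lemma tree_automorphism_append:
  assumes "tree_automorphism g"
  shows "g (\<epsilon> @ \<delta>) = g \<epsilon> @ restr g \<epsilon> \<delta>"
proof -
  have "take (length \<epsilon>) (g (\<epsilon> @ \<delta>)) = g \<epsilon>"
    using assms unfolding tree_automorphism_def by (metis append_eq_conv_conj)
  then show ?thesis unfolding restr_def by (metis append_take_drop_id)
qed

lemma restr_append: "restr g (\<epsilon> @ \<delta>) = restr (restr g \<epsilon>) \<delta>"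
  by (simp add: restr_def fun_eq_iff add.commute)

lemma germ_rel_iff:
  "germ_rel ((\<eta>, g, \<mu>), w) ((\<eta>', g', \<mu>'), w') \<longleftrightarrow> w = w' \<and>
     (\<exists>\<epsilon> \<epsilon>'. \<mu> @ \<epsilon> = \<mu>' @ \<epsilon>' \<and> ptake w (length (\<mu> @ \<epsilon>)) = \<mu> @ \<epsilon>
        \<and> \<eta> @ g \<epsilon> = \<eta>' @ g' \<epsilon>' \<and> restr g \<epsilon> = restr g' \<epsilon>')"
  by (simp add: germ_rel_def)

lemma germ_rel_refl: "w \<in> cyl \<mu> \<Longrightarrow> germ_rel ((\<eta>, g, \<mu>), w) ((\<eta>, g, \<mu>), w)"
  unfolding germ_rel_iff by (intro conjI exI[of _ "[]"]) (simp_all add: cyl_def)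

lemma germ_rel_sym:
  "germ_rel ((\<eta>, g, \<mu>), w) ((\<eta>', g', \<mu>'), w') \<Longrightarrow> germ_rel ((\<eta>', g', \<mu>'), w') ((\<eta>, g, \<mu>), w)"
  unfolding germ_rel_iff by metis

lemma length_ptake [simp]: "length (ptake w N) = N"
  by (simp add: ptake_def)

lemma take_ptake: "N \<le> M \<Longrightarrow> take N (ptake w M) = ptake w N"
  by (simp add: ptake_def take_map)

lemma ptake_split: "N \<le> M \<Longrightarrow> ptake w M = ptake w N @ drop N (ptake w M)"
  by (metis append_take_drop_id take_ptake)

lemma germ_rel_extend:
  assumes "tree_automorphism g" "tree_automorphism g'"
    and "\<eta> @ g \<epsilon> = \<eta>' @ g' \<epsilon>'" "restr g \<epsilon> = restr g' \<epsilon>'"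
  shows "\<eta> @ g (\<epsilon> @ \<delta>) = \<eta>' @ g' (\<epsilon>' @ \<delta>) \<and> restr g (\<epsilon> @ \<delta>) = restr g' (\<epsilon>' @ \<delta>)"
  using assms by (simp add: tree_automorphism_append restr_append flip: append_assoc)

text \<open>Witnesses of the germ relation can be lengthened along w, so any two of them can be
  compared at a common prefix of w; this is what makes the relation transitive.\<close>

lemma germ_rel_eventually:
  assumes "tree_automorphism g" "tree_automorphism g'"
    and "germ_rel ((\<eta>, g, \<mu>), w) ((\<eta>', g', \<mu>'), w')"
  shows "\<forall>\<^sub>F N in sequentially. \<exists>\<epsilon> \<epsilon>'. \<mu> @ \<epsilon> = ptake w N \<and> \<mu>' @ \<epsilon>' = ptake w N
           \<and> \<eta> @ g \<epsilon> = \<eta>' @ g' \<epsilon>' \<and> restr g \<epsilon> = restr g' \<epsilon>'"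
proof -
  obtain \<epsilon> \<epsilon>' where \<mu>: "\<mu> @ \<epsilon> = \<mu>' @ \<epsilon>'" and w: "ptake w (length (\<mu> @ \<epsilon>)) = \<mu> @ \<epsilon>"
    and agree: "\<eta> @ g \<epsilon> = \<eta>' @ g' \<epsilon>'" "restr g \<epsilon> = restr g' \<epsilon>'"
    using assms(3) unfolding germ_rel_iff by blast
  have "\<exists>\<epsilon>\<^sub>1 \<epsilon>\<^sub>1'. \<mu> @ \<epsilon>\<^sub>1 = ptake w N \<and> \<mu>' @ \<epsilon>\<^sub>1' = ptake w N
           \<and> \<eta> @ g \<epsilon>\<^sub>1 = \<eta>' @ g' \<epsilon>\<^sub>1' \<and> restr g \<epsilon>\<^sub>1 = restr g' \<epsilon>\<^sub>1'"
    if "length (\<mu> @ \<epsilon>) \<le> N" for N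
  proof (intro exI conjI)
    define \<delta> where "\<delta> = drop (length (\<mu> @ \<epsilon>)) (ptake w N)"
    show "\<mu> @ \<epsilon> @ \<delta> = ptake w N" "\<mu>' @ \<epsilon>' @ \<delta> = ptake w N"
      using ptake_split[OF that, of w] w \<mu> by (simp_all add: \<delta>_def flip: append_assoc)
    show "\<eta> @ g (\<epsilon> @ \<delta>) = \<eta>' @ g' (\<epsilon>' @ \<delta>)" "restr g (\<epsilon> @ \<delta>) = restr g' (\<epsilon>' @ \<delta>)"
      using germ_rel_extend[OF assms(1,2) agree] by simp_all
  qed
  then show ?thesis unfolding eventually_sequentially by blast
qed

lemma germ_rel_trans:
  assumes "tree_automorphism g\<^sub>1" "tree_automorphism g\<^sub>2" "tree_automorphism g\<^sub>3"
    and r12: "germ_rel ((\<eta>\<^sub>1, g\<^sub>1, \<mu>\<^sub>1), w\<^sub>1) ((\<eta>\<^sub>2, g\<^sub>2, \<mu>\<^sub>2), w\<^sub>2)"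
    and r23: "germ_rel ((\<eta>\<^sub>2, g\<^sub>2, \<mu>\<^sub>2), w\<^sub>2) ((\<eta>\<^sub>3, g\<^sub>3, \<mu>\<^sub>3), w\<^sub>3)"
  shows "germ_rel ((\<eta>\<^sub>1, g\<^sub>1, \<mu>\<^sub>1), w\<^sub>1) ((\<eta>\<^sub>3, g\<^sub>3, \<mu>\<^sub>3), w\<^sub>3)"
proof -
  have w: "w\<^sub>1 = w\<^sub>2" "w\<^sub>2 = w\<^sub>3" using r12 r23 by (simp_all add: germ_rel_iff)
  obtain N \<epsilon>\<^sub>1 \<epsilon>\<^sub>2 \<epsilon>\<^sub>2' \<epsilon>\<^sub>3 where witnesses:
    "\<mu>\<^sub>1 @ \<epsilon>\<^sub>1 = ptake w\<^sub>1 N" "\<mu>\<^sub>2 @ \<epsilon>\<^sub>2 = ptake w\<^sub>1 N"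
    "\<eta>\<^sub>1 @ g\<^sub>1 \<epsilon>\<^sub>1 = \<eta>\<^sub>2 @ g\<^sub>2 \<epsilon>\<^sub>2" "restr g\<^sub>1 \<epsilon>\<^sub>1 = restr g\<^sub>2 \<epsilon>\<^sub>2"
    "\<mu>\<^sub>2 @ \<epsilon>\<^sub>2' = ptake w\<^sub>1 N" "\<mu>\<^sub>3 @ \<epsilon>\<^sub>3 = ptake w\<^sub>1 N"
    "\<eta>\<^sub>2 @ g\<^sub>2 \<epsilon>\<^sub>2' = \<eta>\<^sub>3 @ g\<^sub>3 \<epsilon>\<^sub>3" "restr g\<^sub>2 \<epsilon>\<^sub>2' = restr g\<^sub>3 \<epsilon>\<^sub>3"
    using eventually_happens'[OF sequentially_bot eventually_conj[OF
        germ_rel_eventually[OF assms(1,2) r12] germ_rel_eventually[OF assms(2,3) r23]]] w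
    by auto
  then have "\<epsilon>\<^sub>2' = \<epsilon>\<^sub>2" by (metis same_append_eq)
  with witnesses have "\<mu>\<^sub>1 @ \<epsilon>\<^sub>1 = \<mu>\<^sub>3 @ \<epsilon>\<^sub>3" "ptake w\<^sub>1 (length (\<mu>\<^sub>1 @ \<epsilon>\<^sub>1)) = \<mu>\<^sub>1 @ \<epsilon>\<^sub>1"
    "\<eta>\<^sub>1 @ g\<^sub>1 \<epsilon>\<^sub>1 = \<eta>\<^sub>3 @ g\<^sub>3 \<epsilon>\<^sub>3" "restr g\<^sub>1 \<epsilon>\<^sub>1 = restr g\<^sub>3 \<epsilon>\<^sub>3"
    by simp_all
  then show ?thesis unfolding germ_rel_iff using w by blast
qed

lemma valid_rep_tree_automorphism:
  "valid_rep n \<alpha> ((\<eta>, g, \<mu>), w) \<Longrightarrow> tree_automorphism g"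
  by (auto simp: valid_rep_def intro: Ggrp_tree_automorphism)

lemma rep_cases: obtains \<eta> g \<mu> w where "r = ((\<eta>, g, \<mu>), w)"
  by (metis prod.exhaust)

lemma germ_of_eq_iff:
  assumes r: "valid_rep n \<alpha> r" and r': "valid_rep n \<alpha> r'"
  shows "germ_of n \<alpha> r = germ_of n \<alpha> r' \<longleftrightarrow> germ_rel r r'"
proof -
  have refl: "germ_rel s s" if "valid_rep n \<alpha> s" for s
    using that germ_rel_refl by (cases s rule: rep_cases) (simp add: valid_rep_def)
  have sym: "germ_rel s t \<Longrightarrow> germ_rel t s" for s t
    using germ_rel_sym by (cases s rule: rep_cases, cases t rule: rep_cases) simp
  have trans: "germ_rel s u"
    if "valid_rep n \<alpha> s" "valid_rep n \<alpha> t" "valid_rep n \<alpha> u" "germ_rel s t" "germ_rel t u"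
    for s t u
  proof -
    obtain \<eta>\<^sub>1 g\<^sub>1 \<mu>\<^sub>1 w\<^sub>1 where s: "s = ((\<eta>\<^sub>1, g\<^sub>1, \<mu>\<^sub>1), w\<^sub>1)" by (rule rep_cases)
    obtain \<eta>\<^sub>2 g\<^sub>2 \<mu>\<^sub>2 w\<^sub>2 where t: "t = ((\<eta>\<^sub>2, g\<^sub>2, \<mu>\<^sub>2), w\<^sub>2)" by (rule rep_cases)
    obtain \<eta>\<^sub>3 g\<^sub>3 \<mu>\<^sub>3 w\<^sub>3 where u: "u = ((\<eta>\<^sub>3, g\<^sub>3, \<mu>\<^sub>3), w\<^sub>3)" by (rule rep_cases)
    show ?thesis
      using that germ_rel_trans valid_rep_tree_automorphism unfolding s t u by metis
  qed
  show ?thesis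
    unfolding germ_of_def using r r' refl sym trans by blast
qed

section \<open>The automorphisms \<iota>(\<beta>) and the sets U_m\<close>

lemma iact_replicate_True:
  "iact n \<alpha> \<beta> (replicate j True @ v) = replicate j True @ iact n \<alpha> (\<alpha> ^ j * \<beta>) v"
  by (induction j arbitrary: \<beta>) (auto simp: algebra_simps)

lemma restr_iact_replicate_True:
  "restr (iact n \<alpha> \<beta>) (replicate j True) = iact n \<alpha> (\<alpha> ^ j * \<beta>)"
  by (simp add: restr_def iact_replicate_True fun_eq_iff)

lemma iact_replicate_True_False:
  "iact n \<alpha> \<beta> (replicate k True @ False # v) =
     replicate k True @ False # (if tr n (\<alpha> ^ k * \<beta>) then aact v else v)"
  by (simp add: iact_replicate_True)

lemma germ_rel_iact_iff:
  "germ_rel (([], h, []), w) (([], g, []), w') \<longleftrightarrow>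
     w = w' \<and> (\<exists>\<epsilon>. ptake w (length \<epsilon>) = \<epsilon> \<and> h \<epsilon> = g \<epsilon> \<and> restr h \<epsilon> = restr g \<epsilon>)"
  by (simp add: germ_rel_iff)

lemma valid_rep_iact: "valid_rep n \<alpha> (([], iact n \<alpha> \<beta>, []), w)"
  by (simp add: valid_rep_def cyl_def ptake_def Ggrp.grp_iota)

lemma ptake_ones: "ptake ones N = replicate N True"
  by (simp add: ptake_def ones_def map_replicate_const)

lemma germ_of_iact_mem_Um_iff:
  "germ_of n \<alpha> (([], iact n \<alpha> \<beta>\<^sub>0, []), w) \<in> Um n \<alpha> m (iact n \<alpha> \<beta>) \<longleftrightarrow>
     w \<in> cyl (replicate m True) \<and> germ_rel (([], iact n \<alpha> \<beta>\<^sub>0, []), w) (([], iact n \<alpha> \<beta>, []), w)"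
  by (auto simp: Um_def Theta_def germ_of_eq_iff[OF valid_rep_iact valid_rep_iact]
      germ_rel_iact_iff)

lemma cyl_replicate_True_False_subset:
  assumes "m \<le> k"
  shows "cyl (replicate k True @ [False]) \<subseteq> cyl (replicate m True)"
proof
  fix w assume "w \<in> cyl (replicate k True @ [False])"
  then have "ptake w m = take m (replicate k True @ [False])"
    using take_ptake[of m "Suc k" w] assms by (simp add: cyl_def)
  then show "w \<in> cyl (replicate m True)" using assms by (simp add: cyl_def)
qed

lemma openin_Theta_cyl:
  assumes "g \<in> Ggrp n \<alpha>"
  shows "openin (Gtop n \<alpha>) (Theta n \<alpha> ([], g, []) (cyl \<eta>))"
proof -
  have "openX (cyl \<eta>)"
    unfolding openX_def by (auto simp: cyl_def intro!: exI[of _ "length \<eta>"])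
  then have "Theta n \<alpha> ([], g, []) (cyl \<eta>) \<in> basis n \<alpha>"
    unfolding basis_def using assms by (fastforce simp: cyl_def ptake_def)
  then show ?thesis
    unfolding Gtop_def openin_topology_generated_by_iff by (rule generate_topology_on.Basis)
qed

lemma conc_in_cyl: "conc \<eta> w \<in> cyl \<eta>"
  unfolding cyl_def by (simp, rule nth_equalityI) (simp_all add: ptake_def conc_def)

lemma Theta_cyl_nonempty: "Theta n \<alpha> s (cyl \<eta>) \<noteq> {}"
  unfolding Theta_def using conc_in_cyl by blast

lemma not_SC_if_open_subset_support:
  assumes "openin (Gtop n \<alpha>) V" "V \<noteq> {}" "V \<subseteq> {x. f x \<noteq> 0}"
  shows "f \<notin> SC n \<alpha>"
  using interior_of_maximal[OF assms(3,1)] assms(2) by (auto simp: SC_def)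

context binary_field
begin

lemma iact_inject:
  assumes "iact n \<alpha> \<beta> = iact n \<alpha> \<beta>'"
  shows "\<beta> = \<beta>'"
proof (rule tr_power_mult_inject)
  fix k
  have "iact n \<alpha> \<beta> (replicate k True @ [False, False]) = iact n \<alpha> \<beta>' (replicate k True @ [False, False])"
    using assms by simp
  then show "tr n (\<alpha> ^ k * \<beta>) = tr n (\<alpha> ^ k * \<beta>')"
    by (simp add: iact_replicate_True_False split: if_splits)
qed

lemma germ_rel_iact_ones:
  "germ_rel (([], iact n \<alpha> \<beta>\<^sub>0, []), ones) (([], iact n \<alpha> \<beta>, []), ones) \<longleftrightarrow> \<beta>\<^sub>0 = \<beta>"
proof
  assume "germ_rel (([], iact n \<alpha> \<beta>\<^sub>0, []), ones) (([], iact n \<alpha> \<beta>, []), ones)"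
  then obtain \<epsilon> where "ptake ones (length \<epsilon>) = \<epsilon>"
    and "restr (iact n \<alpha> \<beta>\<^sub>0) \<epsilon> = restr (iact n \<alpha> \<beta>) \<epsilon>"
    unfolding germ_rel_iact_iff by blast
  then have "iact n \<alpha> (\<alpha> ^ length \<epsilon> * \<beta>\<^sub>0) = iact n \<alpha> (\<alpha> ^ length \<epsilon> * \<beta>)"
    by (metis ptake_ones restr_iact_replicate_True)
  then have "\<alpha> ^ length \<epsilon> * \<beta>\<^sub>0 = \<alpha> ^ length \<epsilon> * \<beta>" by (rule iact_inject)
  then show "\<beta>\<^sub>0 = \<beta>"
    using primitive_elem_nonzero[OF primitive] by simp
qed (simp add: germ_rel_refl cyl_def ptake_def)

lemma germ_rel_iact_cyl:
  assumes w: "w \<in> cyl (replicate k True @ [False])"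
  shows "germ_rel (([], iact n \<alpha> \<beta>\<^sub>0, []), w) (([], iact n \<alpha> \<beta>, []), w) \<longleftrightarrow>
         tr n (\<alpha> ^ k * \<beta>\<^sub>0) = tr n (\<alpha> ^ k * \<beta>)"
proof
  assume "tr n (\<alpha> ^ k * \<beta>\<^sub>0) = tr n (\<alpha> ^ k * \<beta>)"
  moreover have "ptake w (length (replicate k True @ [False])) = replicate k True @ [False]"
    using w by (simp add: cyl_def)
  ultimately show "germ_rel (([], iact n \<alpha> \<beta>\<^sub>0, []), w) (([], iact n \<alpha> \<beta>, []), w)"
    unfolding germ_rel_iact_iff
    by (intro conjI exI[of _ "replicate k True @ [False]"])
      (simp_all add: restr_def iact_replicate_True_False)
next
  assume "germ_rel (([], iact n \<alpha> \<beta>\<^sub>0, []), w) (([], iact n \<alpha> \<beta>, []), w)"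
  then obtain \<epsilon> where \<epsilon>: "ptake w (length \<epsilon>) = \<epsilon>" and "iact n \<alpha> \<beta>\<^sub>0 \<epsilon> = iact n \<alpha> \<beta> \<epsilon>"
    and "restr (iact n \<alpha> \<beta>\<^sub>0) \<epsilon> = restr (iact n \<alpha> \<beta>) \<epsilon>"
    unfolding germ_rel_iact_iff by blast
  then have agree: "iact n \<alpha> \<beta>\<^sub>0 (\<epsilon> @ \<delta>) = iact n \<alpha> \<beta> (\<epsilon> @ \<delta>)" for \<delta>
    by (simp add: tree_automorphism_append[OF tree_automorphism_iact])
  \<comment> \<open>lengthen the witness to cover the letter after 1^k 0, which \<iota>(\<beta>) flips iff Tr(\<alpha>^k \<beta>) = 1\<close>
  define M where "M = max (length \<epsilon>) (k + 2)"
  define r where "r = drop (k + 2) (ptake w M)"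
  have "ptake w M = \<epsilon> @ drop (length \<epsilon>) (ptake w M)"
    using ptake_split[of "length \<epsilon>" M w] \<epsilon> by (simp add: M_def)
  then have "iact n \<alpha> \<beta>\<^sub>0 (ptake w M) = iact n \<alpha> \<beta> (ptake w M)"
    using agree by metis
  moreover have "ptake w M = replicate k True @ False # w (Suc k) # r"
    using ptake_split[of "k + 2" M w] w by (simp add: M_def r_def cyl_def ptake_def)
  ultimately have "iact n \<alpha> \<beta>\<^sub>0 (replicate k True @ False # w (Suc k) # r) =
      iact n \<alpha> \<beta> (replicate k True @ False # w (Suc k) # r)"
    by simp
  then show "tr n (\<alpha> ^ k * \<beta>\<^sub>0) = tr n (\<alpha> ^ k * \<beta>)"
    by (simp add: iact_replicate_True_False split: if_splits)
qed

lemma indicator_Um_z_germ: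
  "indicator (Um n \<alpha> m (iact n \<alpha> \<beta>)) (z_germ n \<alpha> (iact n \<alpha> 0)) = (if \<beta> = 0 then 1 else 0)"
  unfolding z_germ_def indicator_def germ_of_iact_mem_Um_iff germ_rel_iact_ones
  by (simp add: cyl_def ptake_ones)

lemma indicator_Um_germ_of_cyl:
  assumes "w \<in> cyl (replicate k True @ [False])" "m \<le> k"
  shows "indicator (Um n \<alpha> m (iact n \<alpha> \<beta>)) (germ_of n \<alpha> (([], iact n \<alpha> \<beta>\<^sub>0, []), w)) =
           (if tr n (\<alpha> ^ k * \<beta>) = tr n (\<alpha> ^ k * \<beta>\<^sub>0) then 1 else 0)"
  using assms cyl_replicate_True_False_subset[OF assms(2)]
  unfolding indicator_def germ_of_iact_mem_Um_iff germ_rel_iact_cyl[OF assms(1)] by auto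

lemma sum_N0: "(\<Sum>g\<in>N0 n \<alpha>. h g) = (\<Sum>\<beta>\<in>UNIV. h (iact n \<alpha> \<beta>))"
proof -
  have "inj (iact n \<alpha>)" using iact_inject by (rule injI)
  then show ?thesis unfolding N0_def by (simp add: sum.reindex)
qed

lemma Um_combination_z_germ:
  fixes C :: "'k \<Rightarrow> 'a::ring_1"
  shows "(\<Sum>\<beta>\<in>UNIV. C \<beta> * indicator (Um n \<alpha> m (iact n \<alpha> \<beta>)) (z_germ n \<alpha> (iact n \<alpha> 0))) = C 0"
  by (simp add: indicator_Um_z_germ if_distrib cong: if_cong)

lemma Um_combination_germ_of_cyl:
  fixes C :: "'k \<Rightarrow> 'a::ring_1"
  assumes "w \<in> cyl (replicate k True @ [False])" "m \<le> k"
  shows "(\<Sum>\<beta>\<in>UNIV. C \<beta> * indicator (Um n \<alpha> m (iact n \<alpha> \<beta>)) (germ_of n \<alpha> (([], iact n \<alpha> \<beta>\<^sub>0, []), w)))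
           = sum C {\<beta>. tr n (\<alpha> ^ k * \<beta>) = tr n (\<alpha> ^ k * \<beta>\<^sub>0)}"
proof -
  have "(\<Sum>\<beta>\<in>UNIV. C \<beta> * indicator (Um n \<alpha> m (iact n \<alpha> \<beta>)) (germ_of n \<alpha> (([], iact n \<alpha> \<beta>\<^sub>0, []), w)))
      = (\<Sum>\<beta>\<in>UNIV. if tr n (\<alpha> ^ k * \<beta>) = tr n (\<alpha> ^ k * \<beta>\<^sub>0) then C \<beta> else 0)"
    by (intro sum.cong) (simp_all add: indicator_Um_germ_of_cyl[OF assms])
  also have "\<dots> = sum C {\<beta>. tr n (\<alpha> ^ k * \<beta>) = tr n (\<alpha> ^ k * \<beta>\<^sub>0)}"
    by (simp add: sum.inter_filter[symmetric])
  finally show ?thesis .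
qed

lemma Um_combination_large_on_open:
  fixes C :: "'k \<Rightarrow> complex"
  assumes "n \<ge> 2" "C 0 \<noteq> 0"
  obtains V where "openin (Gtop n \<alpha>) V" "V \<noteq> {}"
    "\<And>z. z \<in> V \<Longrightarrow>
       cmod (\<Sum>\<beta>\<in>UNIV. C \<beta> * indicator (Um n \<alpha> m (iact n \<alpha> \<beta>)) z) > cmod (C 0) / 2 ^ n"
proof -
  obtain \<gamma> b where "\<gamma> \<noteq> 0" and large: "cmod (sum C {\<beta>. tr n (\<gamma> * \<beta>) = b}) > cmod (C 0) / 2 ^ n"
    using trace_fibre_sum_large[where C=C] assms by blast
  have "{\<beta>. tr n (\<gamma> * \<beta>) = b} \<noteq> {}"
  proof
    assume "{\<beta>. tr n (\<gamma> * \<beta>) = b} = {}"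
    with large show False by (simp add: divide_less_0_iff)
  qed
  then obtain \<beta>\<^sub>0 where "tr n (\<gamma> * \<beta>\<^sub>0) = b" by blast
  obtain k where "m \<le> k" "\<alpha> ^ k = \<gamma>"
    using primitive_elem_powers_surj_ge[OF primitive \<open>\<gamma> \<noteq> 0\<close>] by blast
  show ?thesis
  proof
    let ?V = "Theta n \<alpha> ([], iact n \<alpha> \<beta>\<^sub>0, []) (cyl (replicate k True @ [False]))"
    show "openin (Gtop n \<alpha>) ?V" by (simp add: openin_Theta_cyl Ggrp.grp_iota)
    show "?V \<noteq> {}" by (rule Theta_cyl_nonempty)
    fix z assume "z \<in> ?V"
    then obtain w where "z = germ_of n \<alpha> (([], iact n \<alpha> \<beta>\<^sub>0, []), w)"
      and "w \<in> cyl (replicate k True @ [False])"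
      unfolding Theta_def by blast
    then show "cmod (\<Sum>\<beta>\<in>UNIV. C \<beta> * indicator (Um n \<alpha> m (iact n \<alpha> \<beta>)) z) > cmod (C 0) / 2 ^ n"
      using Um_combination_germ_of_cyl[of w k m C \<beta>\<^sub>0] \<open>m \<le> k\<close> \<open>\<alpha> ^ k = \<gamma>\<close>
        \<open>tr n (\<gamma> * \<beta>\<^sub>0) = b\<close> large
      by simp
  qed
qed

end

theorem mainTheorem11:
  fixes n :: nat and \<alpha> :: "'k::{field,finite}"
    and f :: "germ \<Rightarrow> complex" and m :: nat and c :: "tauto \<Rightarrow> complex"
  assumes "n \<ge> 2" and "CARD('k) = 2 ^ n" and "primitive_elem \<alpha>"
    and "f \<in> AC n \<alpha>"
    and "f = (\<lambda>x. \<Sum>g \<in> N0 n \<alpha>. c g * indicator (Um n \<alpha> m g) x)"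
    and "f (z_germ n \<alpha> (iact n \<alpha> 0)) \<noteq> 0"
  shows "(\<exists>V. Gtop n \<alpha> interior_of V \<noteq> {} \<and>
            (\<forall>z\<in>V. cmod (f z) > cmod (f (z_germ n \<alpha> (iact n \<alpha> 0))) / 2 ^ n))
         \<and> f \<notin> SC n \<alpha>"
proof -
  interpret binary_field n \<alpha> using assms(2,3) by unfold_locales
  define C where "C \<beta> = c (iact n \<alpha> \<beta>)" for \<beta>
  have f_eq: "f z = (\<Sum>\<beta>\<in>UNIV. C \<beta> * indicator (Um n \<alpha> m (iact n \<alpha> \<beta>)) z)" for z
    unfolding assms(5) sum_N0 C_def ..
  have f_ze: "f (z_germ n \<alpha> (iact n \<alpha> 0)) = C 0"
    unfolding f_eq by (rule Um_combination_z_germ)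
  then have "C 0 \<noteq> 0" using assms(6) by simp
  obtain V where V_open: "openin (Gtop n \<alpha>) V" and "V \<noteq> {}"
    and V_large: "\<And>z. z \<in> V \<Longrightarrow> cmod (f z) > cmod (C 0) / 2 ^ n"
    using Um_combination_large_on_open[where C=C and m=m, OF assms(1) \<open>C 0 \<noteq> 0\<close>]
    unfolding f_eq[symmetric] by blast
  have "V \<subseteq> {z. f z \<noteq> 0}"
    using V_large by (force simp: divide_less_0_iff)
  then have "f \<notin> SC n \<alpha>"
    using not_SC_if_open_subset_support[OF V_open \<open>V \<noteq> {}\<close>] by blast
  then show ?thesis
    using V_large f_ze \<open>V \<noteq> {}\<close> interior_of_openin[OF V_open] by auto
qed

end
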